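(* Let $L_x, L_y>0$, $L_{xy}\geq 0$, $0<\mu_x\le L_x$, $0<\mu_y\le L_y$, and let $F\in\mathcal{F}(L_x, L_y, L_{xy}, \mu_x, \mu_y)$ (defined in the context). Set $L=\max\{L_x, L_y\}$, $\mu=\min\{\mu_x, \mu_y\}>0$, and define $\alpha:\left[0, \tfrac{2\mu}{\mu L+L_{xy}^2}\right]\to\mathbb{R}$ by $$ \alpha(t)=1+\tfrac{1}{2}\left(L^2+\mu^2+2L_{xy}^2\right)t^2-(L+\mu)t +\tfrac{1}{2}(L-\mu)t\sqrt{(Lt + \mu t - 2)^2 + 4L_{xy}^2t^2} $$ (the bound factor for one step of the gradient descent-ascent method $x^{2}=x^1-t\nabla_x F(x^1, y^1)$, $y^{2}=y^1+t\nabla_y F(x^1, y^1)$, in the inequality $\|x^2-x^\star\|^2+\|y^2-y^\star\|^2\leq\alpha(t)(\|x^1-x^\star\|^2+\|y^1-y^\star\|^2)$, where $(x^\star,y^\star)$ is the saddle point of $F$). Then the minimizer of $\alpha$ over its domain (the optimal step length with respect to this bound) is $$ t^\star=\tfrac{2\left((L+\mu)\sqrt{L_{xy}^2+L\mu}+L_{xy}(\mu-L)\right)} {\left(4L_{xy}^2+(L+\mu)^2\right)\sqrt{L_{xy}^2+L\mu}}, $$ and $$ \alpha(t^\star)=\tfrac{8 L_{xy} \left(L^2-\mu^2\right) \sqrt{L \mu+L_{xy}^2}+\left(L^2-\mu^2\right)^2+16 L_{xy}^2 \left(L \mu+L_{xy}^2\right)}{\left((L+\mu)^2+4 L_{xy}^2\right)^2}.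 $$
   Context: $\mathcal{F}(L_x, L_y, L_{xy}, \mu_x, \mu_y)$ denotes the set of differentiable $F:\mathbb{R}^n\times\mathbb{R}^m\to\mathbb{R}$ such that for all $x,x_1,x_2,y,y_1,y_2$: $\|\nabla_x F(x_2, y)-\nabla_x F(x_1, y)\|\leq L_x\|x_2-x_1\|$; $\|\nabla_y F(x, y_2)-\nabla_y F(x, y_1)\|\leq L_y\|y_2-y_1\|$; $\|\nabla_x F(x, y_2)-\nabla_x F(x, y_1)\|\leq L_{xy}\|y_2-y_1\|$; $\|\nabla_y F(x_2, y)-\nabla_y F(x_1, y)\|\leq L_{xy}\|x_2-x_1\|$; $F(\cdot, y)-\tfrac{\mu_x}{2}\|\cdot\|^2$ convex for every $y$ and $F(x,\cdot)+\tfrac{\mu_y}{2}\|\cdot\|^2$ concave for every $x$. *)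

theory Defs
  imports "HOL-Analysis.Analysis"
begin

definition FClass ::
  "(real^'n \<Rightarrow> real^'m \<Rightarrow> real) \<Rightarrow> (real^'n \<Rightarrow> real^'m \<Rightarrow> real^'n) \<Rightarrow> (real^'n \<Rightarrow> real^'m \<Rightarrow> real^'m)
   \<Rightarrow> real \<Rightarrow> real \<Rightarrow> real \<Rightarrow> real \<Rightarrow> real \<Rightarrow> bool" where
  "FClass F gx gy Lx Ly Lxy mux muy \<longleftrightarrow>
     (\<forall>x y. (\<lambda>p. F (fst p) (snd p)) differentiable (at (x, y))) \<and>
     (\<forall>x y. ((\<lambda>u. F u y) has_derivative (\<lambda>h. gx x y \<bullet> h)) (at x)) \<and>
     (\<forall>x y. ((\<lambda>v. F x v) has_derivative (\<lambda>h. gy x y \<bullet> h)) (at y)) \<and>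
     (\<forall>x1 x2 y. norm (gx x2 y - gx x1 y) \<le> Lx * norm (x2 - x1)) \<and>
     (\<forall>x y1 y2. norm (gy x y2 - gy x y1) \<le> Ly * norm (y2 - y1)) \<and>
     (\<forall>x y1 y2. norm (gx x y2 - gx x y1) \<le> Lxy * norm (y2 - y1)) \<and>
     (\<forall>x1 x2 y. norm (gy x2 y - gy x1 y) \<le> Lxy * norm (x2 - x1)) \<and>
     (\<forall>y. convex_on UNIV (\<lambda>x. F x y - mux / 2 * (norm x)\<^sup>2)) \<and>
     (\<forall>x. concave_on UNIV (\<lambda>y. F x y + muy / 2 * (norm y)\<^sup>2))"

end

theory Submission
  imports Defs
begin

(* Write w(t) = ((L + mu) t - 2, 2 Lxy t), so that the square root in alpha(t) is |w(t)|, and let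
   e be the unit vector along w(t_opt).  Replacing |w(t)| by the smaller e . w(t) turns alpha into the
   quadratic e_1^2 + s^2 (t - t_opt)^2 with s^2 = Lxy^2 + L mu; the error (L - mu)/2 t (|w(t)| - e . w(t))
   is nonnegative for t >= 0 by Cauchy-Schwarz and vanishes at t_opt, where w(t_opt) is a nonnegative
   multiple of e.  So t_opt is the strict minimiser of alpha on t >= 0 and alpha(t_opt) = e_1^2. *)

locale gda_rate_bound =
  fixes L \<mu> c :: real
  assumes mu_pos: "0 < \<mu>" and mu_le_L: "\<mu> \<le> L" and c_nonneg: "0 \<le> c"
begin

definition rate :: "real \<Rightarrow> real" where
  "rate t = 1 + (1/2) * (L^2 + \<mu>^2 + 2 * c^2) * t^2 - (L + \<mu>) * t
              + (1/2) * (L - \<mu>) * t * sqrt ((L * t + \<mu> * t - 2)^2 + 4 * c^2 * t^2)"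

definition s :: real where "s = sqrt (c^2 + L * \<mu>)"

definition N :: real where "N = 4 * c^2 + (L + \<mu>)^2"

definition t_opt :: real where
  "t_opt = 2 * ((L + \<mu>) * s + c * (\<mu> - L)) / (N * s)"

definition w :: "real \<Rightarrow> real \<times> real" where
  "w t = ((L + \<mu>) * t - 2, 2 * c * t)"

(* The unit vector along w t_opt, still defined when c = 0 and w t_opt = 0. *)
definition e :: "real \<times> real" where
  "e = (- (4 * c * s + (L + \<mu>) * (L - \<mu>)) / N, 2 * ((L + \<mu>) * s - c * (L - \<mu>)) / N)"

lemma s_pos: "0 < s"
  using mu_pos mu_le_L by (simp add: s_def add_nonneg_pos)

lemma s_squared: "s^2 = c^2 + L * \<mu>"
  using mu_pos mu_le_L by (simp add: s_def)

lemma c_le_s: "c \<le> s"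
  unfolding s_def using mu_pos mu_le_L by (intro real_le_rsqrt) simp

lemma N_pos: "0 < N"
  using mu_pos mu_le_L by (simp add: N_def add_nonneg_pos)

lemma N_eq: "N = 4 * s^2 + (L - \<mu>)^2"
  unfolding N_def s_squared by algebra

lemma norm_w: "norm (w t) = sqrt ((L * t + \<mu> * t - 2)^2 + 4 * c^2 * t^2)"
  by (simp add: w_def norm_prod_def algebra_simps power_mult_distrib)

lemma norm_e: "norm e = 1"
proof -
  have "(4 * c * s + (L + \<mu>) * (L - \<mu>))^2 + (2 * ((L + \<mu>) * s - c * (L - \<mu>)))^2
          = (4 * c^2 + (L + \<mu>)^2) * (4 * s^2 + (L - \<mu>)^2)"
    by algebra
  then have "(4 * c * s + (L + \<mu>) * (L - \<mu>))^2 + (2 * ((L + \<mu>) * s - c * (L - \<mu>)))^2 = N^2"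
    using N_eq by (simp add: N_def power2_eq_square)
  then have "(fst e)^2 + (snd e)^2 = 1"
    using N_pos unfolding e_def fst_conv snd_conv power_divide power2_minus
    by (simp flip: add_divide_distrib)
  then show ?thesis
    by (simp add: norm_prod_def)
qed

lemma N_fst_e: "N * fst e = - (4 * c * s + (L + \<mu>) * (L - \<mu>))"
  using N_pos by (simp add: e_def)

lemma N_snd_e: "N * snd e = 2 * ((L + \<mu>) * s - c * (L - \<mu>))"
  using N_pos by (simp add: e_def)

lemma inner_e_slope: "e \<bullet> (L + \<mu>, 2 * c) = - (L - \<mu>)"
proof -
  have "N * (fst e * (L + \<mu>) + snd e * (2 * c)) = N * (- (L - \<mu>))"
    using N_fst_e N_snd_e N_def by algebra
  then show ?thesis
    using N_pos by (simp add: inner_prod_def)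
qed

lemma fst_e_slope: "L + \<mu> + (L - \<mu>) * fst e = 2 * s * snd e"
proof -
  have "N * (L + \<mu> + (L - \<mu>) * fst e) = N * (2 * s * snd e)"
    using N_fst_e N_snd_e N_eq by algebra
  then show ?thesis
    using N_pos by simp
qed

lemma t_opt_eq: "t_opt = snd e / s"
  by (simp add: t_opt_def e_def algebra_simps)

lemma w_t_opt: "w t_opt = (2 * c / s) *\<^sub>R e"
proof -
  have "N * ((L + \<mu>) * snd e - 2 * s) = N * (2 * c * fst e)"
    using N_fst_e N_snd_e N_def by algebra
  then have "(L + \<mu>) * snd e - 2 * s = 2 * c * fst e"
    using N_pos by simp
  then show ?thesis
    using s_pos by (simp add: w_def t_opt_eq prod_eq_iff field_simps)
qed

lemma rate_decomposition:
  "rate t = (fst e)^2 + s^2 * (t - t_opt)^2 + (L - \<mu>) / 2 * t * (norm (w t) - e \<bullet> w t)"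
proof -
  have "e \<bullet> w t = t * (e \<bullet> (L + \<mu>, 2 * c)) - 2 * fst e"
    by (simp add: w_def inner_prod_def algebra_simps)
  also have "\<dots> = - (L - \<mu>) * t - 2 * fst e"
    using inner_e_slope by simp
  finally have inner_w: "e \<bullet> w t = - (L - \<mu>) * t - 2 * fst e" .
  have "(fst e)^2 + (snd e)^2 = 1"
    using norm_e by (simp add: norm_prod_def)
  moreover have "s^2 * (t - snd e / s)^2 = s^2 * t^2 - 2 * s * snd e * t + (snd e)^2"
    using s_pos by (simp add: power2_diff power_divide field_simps power2_eq_square)
  ultimately show ?thesis
    unfolding rate_def norm_w[symmetric] t_opt_eq inner_w using s_squared fst_e_slope
    by algebra
qed

lemma rate_t_opt: "rate t_opt = (fst e)^2"
proof -
  have "norm (w t_opt) = 2 * c / s" "e \<bullet> w t_opt = 2 * c / s"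
    using w_t_opt norm_e c_nonneg s_pos by (simp_all add: inner_commute power2_norm_eq_inner[symmetric])
  then show ?thesis
    using rate_decomposition by simp
qed

lemma rate_t_opt_less:
  assumes "0 \<le> t" "t \<noteq> t_opt"
  shows "rate t_opt < rate t"
proof -
  have "0 \<le> (L - \<mu>) / 2 * t * (norm (w t) - e \<bullet> w t)"
    using norm_cauchy_schwarz[of e "w t"] norm_e mu_le_L assms(1) by simp
  moreover have "0 < s^2 * (t - t_opt)^2"
    using s_pos assms(2) by simp
  ultimately show ?thesis
    using rate_t_opt rate_decomposition[of t] by simp
qed

lemma t_opt_nonneg: "0 \<le> t_opt"
proof -
  have "c * (L - \<mu>) \<le> s * (L + \<mu>)"
    using c_le_s c_nonneg mu_pos mu_le_L by (intro mult_mono) auto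
  then have "0 \<le> N * snd e"
    unfolding N_snd_e by (simp add: algebra_simps)
  then show ?thesis
    using N_pos s_pos by (simp add: t_opt_eq zero_le_mult_iff)
qed

lemma t_opt_le: "t_opt \<le> 2 * \<mu> / (\<mu> * L + c^2)"
proof -
  have "\<mu> * N - ((L + \<mu>) * s - c * (L - \<mu>)) * s
          = 2 * \<mu> * c^2 + (L + \<mu>) * \<mu>^2 + (L - \<mu>) * c * (s - c)"
    using N_def s_squared by algebra
  moreover have "0 \<le> 2 * \<mu> * c^2 + (L + \<mu>) * \<mu>^2 + (L - \<mu>) * c * (s - c)"
    using mu_pos mu_le_L c_nonneg c_le_s by simp
  ultimately have "((L + \<mu>) * s - c * (L - \<mu>)) * s \<le> \<mu> * N"
    by linarith
  then have "N * snd e * s \<le> N * (2 * \<mu>)"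
    unfolding N_snd_e by (simp add: algebra_simps)
  then have "t_opt * s^2 \<le> 2 * \<mu>"
    using N_pos s_pos by (simp add: t_opt_eq power2_eq_square)
  moreover have "\<mu> * L + c^2 = s^2"
    using s_squared by simp
  ultimately show ?thesis
    using s_pos by (simp add: pos_le_divide_eq)
qed

lemma fst_e_squared:
  "(fst e)^2 = (8 * c * (L^2 - \<mu>^2) * s + (L^2 - \<mu>^2)^2 + 16 * c^2 * s^2) / ((L + \<mu>)^2 + 4 * c^2)^2"
proof -
  have "(fst e)^2 = (4 * c * s + (L + \<mu>) * (L - \<mu>))^2 / N^2"
    unfolding e_def fst_conv power_divide power2_minus ..
  also have "(4 * c * s + (L + \<mu>) * (L - \<mu>))^2 = 8 * c * (L^2 - \<mu>^2) * s + (L^2 - \<mu>^2)^2 + 16 * c^2 * s^2"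
    by algebra
  finally show ?thesis
    by (simp add: N_def add.commute)
qed

end

theorem proposition2p3:
  fixes F :: "real^'n \<Rightarrow> real^'m \<Rightarrow> real"
    and gx :: "real^'n \<Rightarrow> real^'m \<Rightarrow> real^'n"
    and gy :: "real^'n \<Rightarrow> real^'m \<Rightarrow> real^'m"
    and Lx Ly Lxy mux muy :: real
  assumes "Lx > 0" "Ly > 0" "Lxy \<ge> 0"
    and "0 < mux" "mux \<le> Lx" "0 < muy" "muy \<le> Ly"
    and "FClass F gx gy Lx Ly Lxy mux muy"
  defines "L \<equiv> max Lx Ly"
    and "\<mu> \<equiv> min mux muy"
  defines "\<alpha> \<equiv> (\<lambda>t::real. 1 + (1/2) * (L^2 + \<mu>^2 + 2 * Lxy^2) * t^2 - (L + \<mu>) * t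
              + (1/2) * (L - \<mu>) * t * sqrt ((L * t + \<mu> * t - 2)^2 + 4 * Lxy^2 * t^2))"
    and "D \<equiv> {0 .. 2 * \<mu> / (\<mu> * L + Lxy^2)}"
    and "tstar \<equiv> 2 * ((L + \<mu>) * sqrt (Lxy^2 + L * \<mu>) + Lxy * (\<mu> - L))
                 / ((4 * Lxy^2 + (L + \<mu>)^2) * sqrt (Lxy^2 + L * \<mu>))"
  shows "tstar \<in> D \<and> (\<forall>t\<in>D. t \<noteq> tstar \<longrightarrow> \<alpha> tstar < \<alpha> t) \<and>
         \<alpha> tstar = (8 * Lxy * (L^2 - \<mu>^2) * sqrt (L * \<mu> + Lxy^2) + (L^2 - \<mu>^2)^2
                     + 16 * Lxy^2 * (L * \<mu> + Lxy^2)) / (((L + \<mu>)^2 + 4 * Lxy^2)^2)"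
proof -
  (* Only the parameter constraints matter: alpha depends on F through L, mu and Lxy alone. *)
  have "0 < \<mu>" "\<mu> \<le> L"
    using assms(4-7) unfolding L_def \<mu>_def by auto
  then interpret g: gda_rate_bound L \<mu> Lxy
    using \<open>Lxy \<ge> 0\<close> by unfold_locales
  have alpha: "\<alpha> = g.rate"
    by (simp add: fun_eq_iff \<alpha>_def g.rate_def)
  have tstar: "tstar = g.t_opt"
    by (simp add: tstar_def g.t_opt_def g.N_def g.s_def)
  have "tstar \<in> D"
    using g.t_opt_nonneg g.t_opt_le unfolding D_def tstar by simp
  moreover have "\<forall>t\<in>D. t \<noteq> tstar \<longrightarrow> \<alpha> tstar < \<alpha> t"
    using g.rate_t_opt_less unfolding D_def alpha tstar by simp
  moreover have "sqrt (L * \<mu> + Lxy^2) = g.s" "L * \<mu> + Lxy^2 = g.s^2"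
    using g.s_squared by (simp_all add: g.s_def add.commute)
  then have "\<alpha> tstar = (8 * Lxy * (L^2 - \<mu>^2) * sqrt (L * \<mu> + Lxy^2) + (L^2 - \<mu>^2)^2
                     + 16 * Lxy^2 * (L * \<mu> + Lxy^2)) / (((L + \<mu>)^2 + 4 * Lxy^2)^2)"
    unfolding alpha tstar g.rate_t_opt g.fst_e_squared by simp
  ultimately show ?thesis
    by blast
qed

end
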